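(* Let $d>0$ be square-free, $r$ a positive divisor of $d$, $s=-d/r$, and $u,v\in\mathbb{Z}$ with $us-vr=1$; set $\sigma_r=\begin{pmatrix}\sqrt{-d}&r\\ vr&u\sqrt{-d}\end{pmatrix}$. Let $m,c\in\mathbb{Z}$ with $0<m<d/2$ and $0<m^2-dc<d/4$, and $A=\begin{pmatrix}d&m\sqrt{-d}\\ -m\sqrt{-d}&dc\end{pmatrix}$. Then $\sigma_r^*A\sigma_r$ corresponds to an orientable embedded totally geodesic surface in $\Omega_d$.
   Context: $\mathcal{O}_d$ is the ring of integers of $\mathbb{Q}(\sqrt{-d})$, $\Gamma_d=\mathrm{PSL}(2,\mathcal{O}_d)$, $\Omega_d=\mathbb{H}^3/\Gamma_d$; $\sigma^*$ is conjugate transpose. A Hermitian matrix $A'$ corresponds to the totally geodesic surface in $\Omega_d$ that is the image of the hyperbolic plane $H$ bounded by the circle $\mathcal{C}=\{z:(z\ 1)A'(\bar z\ 1)^T=0\}$ (for $A'=\sigma_r^*A\sigma_r$ this circle is the image under the Möbius map $\sigma_r^{-1}$ of the circle of $A$). The surface is embedded if for all $\gamma\in\Gamma_d$, $\gamma H=H$ or $\gamma H\cap H=\emptyset$; it is orientable if no element of $\Gamma_d$ preserving $\mathcal{C}$ interchanges the two components of $(\mathbb{C}\cup\{\infty\})\setminus\mathcal{C}$. *)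

theory Defs
  imports "HOL-Analysis.Analysis" "HOL-Computational_Algebra.Squarefree"
begin

text \<open>2x2 complex matrices as complex^2^2 (row i, column j: M$i$j).\<close>

definition mat2 :: "complex \<Rightarrow> complex \<Rightarrow> complex \<Rightarrow> complex \<Rightarrow> complex^2^2" where
  "mat2 a b c e = (\<chi> i j. if i = 1 then (if j = 1 then a else b) else (if j = 1 then c else e))"

definition conj_transpose :: "complex^2^2 \<Rightarrow> complex^2^2" where
  "conj_transpose M = (\<chi> i j. cnj (M $ j $ i))"

definition hermitian2 :: "complex^2^2 \<Rightarrow> bool" where
  "hermitian2 M \<longleftrightarrow> conj_transpose M = M"

definition sqrt_neg :: "int \<Rightarrow> complex" where
  "sqrt_neg d = \<i> * complex_of_real (sqrt (real_of_int d))"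

definition ring_of_integers :: "int \<Rightarrow> complex set" where
  "ring_of_integers d =
     (if d mod 4 = 3
      then {of_int a + of_int b * (1 + sqrt_neg d) / 2 | a b :: int. True}
      else {of_int a + of_int b * sqrt_neg d | a b :: int. True})"

text \<open>Gamma_d = PSL(2,O_d).  We quantify over representatives in SL(2,O_d);
  g and -g act identically on the Riemann sphere and on H^3.\<close>
definition Gamma :: "int \<Rightarrow> (complex^2^2) set" where
  "Gamma d = {g. (\<forall>i j. g $ i $ j \<in> ring_of_integers d) \<and> det g = 1}"

text \<open>Riemann sphere C \<union> {\<infinity>} as complex option (None = \<infinity>), with homogeneous coordinates.\<close>
type_synonym riemann_sphere = "complex option"

definition hom :: "riemann_sphere \<Rightarrow> complex \<times> complex" where
  "hom P = (case P of None \<Rightarrow> (1, 0) | Some z \<Rightarrow> (z, 1))"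

definition dehom :: "complex \<times> complex \<Rightarrow> riemann_sphere" where
  "dehom pq = (if snd pq = 0 then None else Some (fst pq / snd pq))"

definition moebius :: "complex^2^2 \<Rightarrow> riemann_sphere \<Rightarrow> riemann_sphere" where
  "moebius g P = (let (p, q) = hom P in
     dehom (g$1$1 * p + g$1$2 * q, g$2$1 * p + g$2$2 * q))"

definition hform :: "complex^2^2 \<Rightarrow> complex \<times> complex \<Rightarrow> complex" where
  "hform A pq = (let (p, q) = pq in
     p * A$1$1 * cnj p + p * A$1$2 * cnj q + q * A$2$1 * cnj p + q * A$2$2 * cnj q)"

text \<open>The circle C of A in C \<union> {\<infinity>}: zero set of (z 1)A(conj z 1)^T (with \<infinity> included iff A11 = 0).\<close>
definition circle_of :: "complex^2^2 \<Rightarrow> riemann_sphere set" where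
  "circle_of A = {P. hform A (hom P) = 0}"

text \<open>The two components of (C \<union> {\<infinity>}) - C for a Hermitian A with det A < 0.\<close>
definition neg_side :: "complex^2^2 \<Rightarrow> riemann_sphere set" where
  "neg_side A = {P. Re (hform A (hom P)) < 0}"
definition pos_side :: "complex^2^2 \<Rightarrow> riemann_sphere set" where
  "pos_side A = {P. Re (hform A (hom P)) > 0}"

text \<open>A Hermitian matrix defines a genuine circle iff det A < 0.\<close>
definition circle_matrix :: "complex^2^2 \<Rightarrow> bool" where
  "circle_matrix A \<longleftrightarrow> hermitian2 A \<and> Re (det A) < 0"

definition H3 :: "(complex \<times> real) set" where
  "H3 = {(z, t). t > 0}"

definition poincare :: "complex^2^2 \<Rightarrow> complex \<times> real \<Rightarrow> complex \<times> real" where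
  "poincare g zt = (let (z, t) = zt; a = g$1$1; b = g$1$2; c = g$2$1; e = g$2$2;
       D = (cmod (c * z + e))\<^sup>2 + (cmod c)\<^sup>2 * t\<^sup>2 in
     (((a * z + b) * cnj (c * z + e) + a * cnj c * complex_of_real (t\<^sup>2)) / complex_of_real D, t / D))"

text \<open>Hyperbolic plane in H^3 bounded by the circle of A (hemisphere or vertical half-plane).\<close>
definition hplane :: "complex^2^2 \<Rightarrow> (complex \<times> real) set" where
  "hplane A = {(z, t). t > 0 \<and>
     Re (A$1$1) * ((cmod z)\<^sup>2 + t\<^sup>2) + 2 * Re (z * A$1$2) + Re (A$2$2) = 0}"

definition embedded_surface :: "int \<Rightarrow> complex^2^2 \<Rightarrow> bool" where
  "embedded_surface d A \<longleftrightarrow>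
     (\<forall>g \<in> Gamma d. poincare g ` hplane A = hplane A \<or> poincare g ` hplane A \<inter> hplane A = {})"

definition orientable_surface :: "int \<Rightarrow> complex^2^2 \<Rightarrow> bool" where
  "orientable_surface d A \<longleftrightarrow>
     \<not> (\<exists>g \<in> Gamma d. moebius g ` circle_of A = circle_of A \<and>
          moebius g ` neg_side A = pos_side A \<and> moebius g ` pos_side A = neg_side A)"

end

theory Submission
  imports Defs
begin

text \<open>Hermitian \<open>2 \<times> 2\<close> matrices with the quadratic form \<open>- det\<close> form a Lorentz space. A matrix
  \<open>X\<close> with \<open>det X < 0\<close> defines the circle and the plane, and \<open>\<gamma> \<in> \<Gamma>\<^sub>d\<close> acts on it by the pullback
  \<open>\<gamma>\<^sup>T X cnj \<gamma>\<close>, which preserves \<open>det\<close>. If the plane of \<open>X\<close> meets its image under \<open>\<gamma>\<close>, then at a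
  common point both matrices become Euclidean vectors in \<open>\<real>\<^sup>3\<close> of squared length \<open>- det X\<close>, so
  \<open>|\<langle>X, \<gamma>X\<rangle>| \<le> - det X\<close> with equality \<open>\<langle>X, \<gamma>X\<rangle> = - det X\<close> only if \<open>\<gamma>X = X\<close>. If \<open>\<gamma>\<close> preserves the
  circle and swaps its sides, then \<open>\<gamma>X = -X\<close> and \<open>\<langle>X, \<gamma>X\<rangle> = det X\<close>. Hence both the embedding
  and the orientability follow from the gap condition \<open>\<langle>X, \<gamma>X\<rangle> \<notin> [det X, - det X)\<close>.

  Here \<open>\<sigma>\<^sub>r\<^sup>* A \<sigma>\<^sub>r = r [[d a\<^sub>1, b \<surd>-d], [-b \<surd>-d, d a\<^sub>2]]\<close> with \<open>k = b\<^sup>2 - d a\<^sub>1 a\<^sub>2 = m\<^sup>2 - d c\<close> and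
  \<open>- det = r\<^sup>2 d k\<close>. Reducing \<open>cnj \<gamma>\<close> to \<open>\<gamma>\<close> modulo \<open>\<surd>-d\<close> in \<open>\<O>\<^sub>d\<close> gives
  \<open>2 \<langle>X, \<gamma>X\<rangle> = r\<^sup>2 d (2 k + d N)\<close> with \<open>N \<in> \<int>\<close>, and \<open>0 < 4 k < d\<close> keeps this out of
  \<open>[-2 r\<^sup>2 d k, 2 r\<^sup>2 d k)\<close>.\<close>

section \<open>Two-by-two complex matrices\<close>

lemma mat2_nth [simp]:
  "mat2 a b c e $ 1 $ 1 = a" "mat2 a b c e $ 1 $ 2 = b"
  "mat2 a b c e $ 2 $ 1 = c" "mat2 a b c e $ 2 $ 2 = e"
  by (simp_all add: mat2_def)

lemma mat2_collapse: "mat2 (M$1$1) (M$1$2) (M$2$1) (M$2$2) = M"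
  by (simp add: mat2_def vec_eq_iff forall_2)

lemma mat2_cases:
  obtains a b c e where "M = mat2 a b c e"
  using mat2_collapse by metis

lemma mat2_eq_iff: "mat2 a b c e = mat2 a' b' c' e' \<longleftrightarrow> a = a' \<and> b = b' \<and> c = c' \<and> e = e'"
  by (metis mat2_nth)

lemma mat2_mult: "mat2 a b c e ** mat2 a' b' c' e' =
    mat2 (a*a' + b*c') (a*b' + b*e') (c*a' + e*c') (c*b' + e*e')"
  by (simp add: mat2_def matrix_matrix_mult_def vec_eq_iff forall_2 sum_2)

lemma transpose_mat2: "transpose (mat2 a b c e) = mat2 a c b e"
  by (simp add: mat2_def transpose_def vec_eq_iff forall_2)

lemma conj_transpose_mat2: "conj_transpose (mat2 a b c e) = mat2 (cnj a) (cnj c) (cnj b) (cnj e)"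
  by (simp add: mat2_def conj_transpose_def vec_eq_iff forall_2)

lemma det_mat2: "det (mat2 a b c e) = a*e - b*c"
  by (simp add: det_2)

lemma scaleR_mat2: "l *\<^sub>R mat2 a b c e = mat2 (of_real l * a) (of_real l * b) (of_real l * c) (of_real l * e)"
  by (simp add: mat2_def vec_eq_iff forall_2 flip: scaleR_conv_of_real)

lemma hermitian2_mat2_iff: "hermitian2 (mat2 a b c e) \<longleftrightarrow> cnj a = a \<and> c = cnj b \<and> cnj e = e"
  unfolding hermitian2_def conj_transpose_mat2 mat2_eq_iff by auto

lemma hermitian2E:
  assumes "hermitian2 X"
  obtains a c :: real and b where "X = mat2 (of_real a) b (cnj b) (of_real c)"
proof -
  obtain x11 x12 x21 x22 where X: "X = mat2 x11 x12 x21 x22" by (rule mat2_cases)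
  with assms have "x11 = of_real (Re x11)" "x21 = cnj x12" "x22 = of_real (Re x22)"
    by (auto simp: hermitian2_mat2_iff complex_eq_iff)
  with X that show ?thesis by metis
qed

lemma matrix_mul_scaleR_right:
  fixes A :: "'a::real_algebra_1 ^'n^'m"
  shows "A ** (c *\<^sub>R B) = c *\<^sub>R (A ** B)"
  by (simp add: matrix_matrix_mult_def vec_eq_iff scaleR_sum_right)

lemma matrix_mul_scaleR_left:
  fixes A :: "'a::real_algebra_1 ^'n^'m"
  shows "(c *\<^sub>R A) ** B = c *\<^sub>R (A ** B)"
  by (simp add: matrix_matrix_mult_def vec_eq_iff scaleR_sum_right)

lemma trace_scaleR:
  fixes A :: "'a::real_algebra_1 ^'n^'n"
  shows "trace (c *\<^sub>R A) = c *\<^sub>R trace A"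
  by (simp add: trace_def scaleR_sum_right)

section \<open>The ring of integers\<close>

lemma sqrt_neg_mult_self: "d \<ge> 0 \<Longrightarrow> sqrt_neg d * sqrt_neg d = - of_int d"
  unfolding sqrt_neg_def by (simp add: algebra_simps flip: of_real_mult)

lemma cnj_sqrt_neg [simp]: "cnj (sqrt_neg d) = - sqrt_neg d"
  by (simp add: sqrt_neg_def)

lemma ring_of_integersE:
  assumes "x \<in> ring_of_integers d"
  obtains a b :: int where "d mod 4 = 3" "x = of_int a + of_int b * (1 + sqrt_neg d) / 2"
  | a b :: int where "d mod 4 \<noteq> 3" "x = of_int a + of_int b * sqrt_neg d"
  using assms unfolding ring_of_integers_def by (auto split: if_splits)

lemma ring_of_integersI_3mod4:
  "d mod 4 = 3 \<Longrightarrow> x = of_int a + of_int b * (1 + sqrt_neg d) / 2 \<Longrightarrow> x \<in> ring_of_integers d"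
  unfolding ring_of_integers_def by auto

lemma ring_of_integersI:
  "d mod 4 \<noteq> 3 \<Longrightarrow> x = of_int a + of_int b * sqrt_neg d \<Longrightarrow> x \<in> ring_of_integers d"
  unfolding ring_of_integers_def by auto

lemma of_int_in_ring_of_integers [simp]: "of_int n \<in> ring_of_integers d"
  by (cases "d mod 4 = 3")
    (auto intro: ring_of_integersI_3mod4[where a=n and b=0] ring_of_integersI[where a=n and b=0])

lemma sqrt_neg_in_ring_of_integers [simp]: "sqrt_neg d \<in> ring_of_integers d"
proof (cases "d mod 4 = 3")
  case True
  show ?thesis by (rule ring_of_integersI_3mod4[OF True, where a="-1" and b=2]) (simp add: field_simps)
next
  case False
  show ?thesis by (rule ring_of_integersI[OF False, where a=0 and b=1]) simp
qed

lemma ring_of_integers_add [simp]: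
  "x \<in> ring_of_integers d \<Longrightarrow> y \<in> ring_of_integers d \<Longrightarrow> x + y \<in> ring_of_integers d"
proof (erule ring_of_integersE; erule ring_of_integersE)
  fix a b a' b'
  assume "d mod 4 = 3" "x = of_int a + of_int b * (1 + sqrt_neg d) / 2"
    "y = of_int a' + of_int b' * (1 + sqrt_neg d) / 2"
  then show ?thesis
    by (intro ring_of_integersI_3mod4[where a="a+a'" and b="b+b'"]) (auto simp: field_simps)
next
  fix a b a' b'
  assume "d mod 4 \<noteq> 3" "x = of_int a + of_int b * sqrt_neg d" "y = of_int a' + of_int b' * sqrt_neg d"
  then show ?thesis
    by (intro ring_of_integersI[where a="a+a'" and b="b+b'"]) (auto simp: field_simps)
qed auto

lemma ring_of_integers_uminus [simp]:
  assumes "x \<in> ring_of_integers d"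
  shows "- x \<in> ring_of_integers d"
  using assms
proof (cases rule: ring_of_integersE)
  case (1 a b)
  then show ?thesis
    by (intro ring_of_integersI_3mod4[where a="-a" and b="-b"]) (auto simp: field_simps)
next
  case (2 a b)
  then show ?thesis
    by (intro ring_of_integersI[where a="-a" and b="-b"]) (auto simp: field_simps)
qed

lemma ring_of_integers_diff [simp]:
  "x \<in> ring_of_integers d \<Longrightarrow> y \<in> ring_of_integers d \<Longrightarrow> x - y \<in> ring_of_integers d"
  using ring_of_integers_add[of x d "-y"] by simp

lemma ring_of_integers_mult [simp]:
  assumes "d \<ge> 0"
  shows "x \<in> ring_of_integers d \<Longrightarrow> y \<in> ring_of_integers d \<Longrightarrow> x * y \<in> ring_of_integers d"
proof (erule ring_of_integersE; erule ring_of_integersE)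
  fix a b a' b'
  assume d3: "d mod 4 = 3" and xy: "x = of_int a + of_int b * (1 + sqrt_neg d) / 2"
    "y = of_int a' + of_int b' * (1 + sqrt_neg d) / 2"
  define e where "e = (d + 1) div 4"
  have "d + 1 = 4 * e" using d3 unfolding e_def by presburger
  then have "(of_int d :: complex) = 4 * of_int e - 1"
    by (metis add_diff_cancel_right' of_int_1 of_int_diff of_int_mult of_int_numeral)
  then have "x * y = of_int (a*a' - b*b'*e) + of_int (a*b' + a'*b + b*b') * (1 + sqrt_neg d) / 2"
    unfolding xy using sqrt_neg_mult_self[OF assms] by (simp add: field_simps) algebra
  then show ?thesis by (rule ring_of_integersI_3mod4[OF d3])
next
  fix a b a' b'
  assume d3: "d mod 4 \<noteq> 3" and xy: "x = of_int a + of_int b * sqrt_neg d"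
    "y = of_int a' + of_int b' * sqrt_neg d"
  have "x * y = of_int (a*a' - b*b'*d) + of_int (a*b' + a'*b) * sqrt_neg d"
    unfolding xy of_int_diff of_int_add of_int_mult using sqrt_neg_mult_self[OF assms] by algebra
  then show ?thesis by (rule ring_of_integersI[OF d3])
qed auto

lemma cnj_ring_of_integers:
  assumes "x \<in> ring_of_integers d"
  obtains n :: int where "cnj x = x - sqrt_neg d * of_int n"
  using assms
proof (cases rule: ring_of_integersE)
  case (1 a b)
  show ?thesis by (rule that[of b]) (unfold 1(2), simp add: field_simps)
next
  case (2 a b)
  show ?thesis by (rule that[of "2*b"]) (unfold 2(2), simp add: field_simps)
qed

lemma sqrt_neg_mult_real_in_ring_of_integers:
  assumes "d > 0" "x \<in> ring_of_integers d" "Im (sqrt_neg d * x) = 0"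
  obtains n :: int where "sqrt_neg d * x = of_int (d * n)"
  using assms(2)
proof (cases rule: ring_of_integersE)
  case (1 a b)
  from assms(3) have "sqrt (real_of_int d) * (2 * a + b) = 0"
    by (simp add: 1 field_simps sqrt_neg_def)
  with assms(1) have "b = - 2 * a" by simp
  with 1 have "sqrt_neg d * x = - (sqrt_neg d * sqrt_neg d) * of_int a"
    by (simp add: field_simps)
  with assms(1) have "sqrt_neg d * x = of_int (d * a)"
    by (simp add: sqrt_neg_mult_self)
  then show ?thesis by (rule that)
next
  case (2 a b)
  from assms(3) have "sqrt (real_of_int d) * a = 0"
    by (simp add: 2 field_simps sqrt_neg_def)
  with assms(1) have "a = 0" by simp
  with 2 have "sqrt_neg d * x = - (sqrt_neg d * sqrt_neg d) * of_int (- b)"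
    by (simp add: field_simps)
  with assms(1) have "sqrt_neg d * x = of_int (d * - b)"
    by (simp add: sqrt_neg_mult_self)
  then show ?thesis by (rule that)
qed

section \<open>Hermitian forms and their pullbacks\<close>

definition cnj_mat :: "complex^2^2 \<Rightarrow> complex^2^2" where
  "cnj_mat M = (\<chi> i j. cnj (M $ i $ j))"

definition pullback :: "complex^2^2 \<Rightarrow> complex^2^2 \<Rightarrow> complex^2^2" where
  "pullback g X = transpose g ** X ** cnj_mat g"

lemma cnj_mat_mat2: "cnj_mat (mat2 a b c e) = mat2 (cnj a) (cnj b) (cnj c) (cnj e)"
  by (simp add: mat2_def cnj_mat_def vec_eq_iff forall_2)

lemma det_cnj_mat: "det (cnj_mat g) = cnj (det g)"
  by (simp add: cnj_mat_def det_2)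

lemma pullback_mat2: "pullback (mat2 a b c e) (mat2 x11 x12 x21 x22) =
  mat2 (a*x11*cnj a + a*x12*cnj c + c*x21*cnj a + c*x22*cnj c)
       (a*x11*cnj b + a*x12*cnj e + c*x21*cnj b + c*x22*cnj e)
       (b*x11*cnj a + b*x12*cnj c + e*x21*cnj a + e*x22*cnj c)
       (b*x11*cnj b + b*x12*cnj e + e*x21*cnj b + e*x22*cnj e)"
  unfolding pullback_def transpose_mat2 cnj_mat_mat2 mat2_mult mat2_eq_iff
  by (intro conjI; algebra)

lemma det_pullback: "det (pullback g X) = det g * det X * cnj (det g)"
  by (simp add: pullback_def det_mul det_transpose det_cnj_mat)

lemma hermitian2_pullback:
  assumes "hermitian2 X"
  shows "hermitian2 (pullback g X)"
proof -
  obtain a b c e where g: "g = mat2 a b c e" by (rule mat2_cases)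
  obtain x z y where X: "X = mat2 (of_real x) y (cnj y) (of_real z)"
    using assms by (rule hermitian2E)
  show ?thesis
    unfolding g X pullback_mat2 hermitian2_mat2_iff
    by (simp only: complex_cnj_mult complex_cnj_add complex_cnj_cnj complex_cnj_complex_of_real)
      (intro conjI; algebra)
qed

lemma hform_pair:
  "hform X (p,q) = p*X$1$1*cnj p + p*X$1$2*cnj q + q*X$2$1*cnj p + q*X$2$2*cnj q"
  by (simp add: hform_def)

lemma hform_mat2:
  "hform (mat2 x11 x12 x21 x22) (p,q) = p*x11*cnj p + p*x12*cnj q + q*x21*cnj p + q*x22*cnj q"
  by (simp add: hform_pair)

lemma hform_pullback:
  "hform (pullback g X) (p,q) = hform X (g$1$1*p + g$1$2*q, g$2$1*p + g$2$2*q)"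
proof -
  obtain a b c e where g: "g = mat2 a b c e" by (rule mat2_cases)
  obtain x11 x12 x21 x22 where X: "X = mat2 x11 x12 x21 x22" by (rule mat2_cases)
  show ?thesis
    unfolding g X pullback_mat2 hform_mat2 mat2_nth complex_cnj_add complex_cnj_mult by algebra
qed

lemma hform_scale: "hform X (k*p, k*q) = of_real ((cmod k)\<^sup>2) * hform X (p,q)"
proof -
  obtain x11 x12 x21 x22 where X: "X = mat2 x11 x12 x21 x22" by (rule mat2_cases)
  show ?thesis
    unfolding X hform_mat2 complex_cnj_mult complex_norm_square by algebra
qed

lemma hform_scaleR: "hform (l *\<^sub>R X) v = of_real l * hform X v"
  by (simp only: hform_def vector_scaleR_component) (simp add: case_prod_unfold scaleR_conv_of_real algebra_simps)

lemma hform_diff: "hform (X - Y) v = hform X v - hform Y v"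
  by (simp add: hform_def case_prod_unfold algebra_simps)

lemma hform_hermitian_real:
  assumes "hermitian2 X"
  shows "hform X v = of_real (Re (hform X v))"
proof -
  obtain p q where v: "v = (p,q)" by fastforce
  obtain x z y where X: "X = mat2 (of_real x) y (cnj y) (of_real z)"
    using assms by (rule hermitian2E)
  have "cnj (hform X v) = hform X v"
    unfolding X v hform_mat2 complex_cnj_add complex_cnj_mult complex_cnj_cnj complex_cnj_complex_of_real
    by algebra
  then show ?thesis by (simp add: complex_eq_iff)
qed

lemma hom_neq_zero: "hom P \<noteq> (0,0)"
  by (cases P) (auto simp: hom_def)

lemma hform_hom_dehom:
  assumes "v \<noteq> (0,0)"
  obtains c :: real where "c > 0" "\<And>X. hform X v = of_real c * hform X (hom (dehom v))"
proof -
  obtain p q where v: "v = (p,q)" by fastforce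
  obtain k where "k \<noteq> 0" "v = (k * fst (hom (dehom v)), k * snd (hom (dehom v)))"
  proof (cases "q = 0")
    case True
    with assms v have "p \<noteq> 0" by auto
    with True v that[of p] show ?thesis by (simp add: dehom_def hom_def)
  next
    case False
    with v that[of q] show ?thesis by (simp add: dehom_def hom_def)
  qed
  then show ?thesis
    using that[of "(cmod k)\<^sup>2"] hform_scale[of _ k] by (metis prod.collapse zero_less_norm_iff zero_less_power)
qed

lemma hform_pullback_hom:
  assumes "det g = 1"
  obtains c :: real where "c > 0" "\<And>X. hform (pullback g X) (hom P) = of_real c * hform X (hom (moebius g P))"
proof -
  obtain p q where pq: "hom P = (p,q)" by fastforce
  define v where "v = (g$1$1*p + g$1$2*q, g$2$1*p + g$2$2*q)"
  have "v \<noteq> (0,0)"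
  proof
    assume "v = (0,0)"
    then have "g$1$1*p + g$1$2*q = 0" "g$2$1*p + g$2$2*q = 0" by (simp_all add: v_def)
    then have "det g * p = 0" "det g * q = 0" unfolding det_2 by algebra+
    with assms pq hom_neq_zero[of P] show False by simp
  qed
  moreover have "moebius g P = dehom v"
    by (simp add: moebius_def pq v_def)
  ultimately show ?thesis
    using that hform_hom_dehom[of v] unfolding pq hform_pullback v_def[symmetric] by metis
qed

section \<open>The Poincare extension\<close>

text \<open>A point \<open>(z, t)\<close> of \<open>\<bbbH>\<^sup>3\<close> is encoded by a positive Hermitian matrix; the Poincare
  extension of \<open>g\<close> acts on these codes by \<open>M \<mapsto> cnj g M g\<^sup>T\<close> up to a positive factor, and the
  plane of a Hermitian \<open>X\<close> is cut out by \<open>trace (X M) = 0\<close>.\<close>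

definition point_matrix :: "complex \<times> real \<Rightarrow> complex^2^2" where
  "point_matrix p = mat2 (of_real ((cmod (fst p))\<^sup>2 + (snd p)\<^sup>2)) (cnj (fst p)) (fst p) 1"

lemma point_matrix_inj:
  assumes "point_matrix (z,t) = point_matrix (z',t')" "t > 0" "t' > 0"
  shows "(z,t) = (z',t')"
proof -
  have z: "z = z'"
    using arg_cong[OF assms(1), of "\<lambda>M. M$2$1"] unfolding point_matrix_def mat2_nth fst_conv .
  have "complex_of_real ((cmod z)\<^sup>2 + t\<^sup>2) = of_real ((cmod z')\<^sup>2 + t'\<^sup>2)"
    using arg_cong[OF assms(1), of "\<lambda>M. M$1$1"] unfolding point_matrix_def mat2_nth fst_conv snd_conv .
  then have "t\<^sup>2 = t'\<^sup>2" unfolding z of_real_eq_iff by simp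
  with z assms(2,3) show ?thesis by (simp add: power2_eq_iff_nonneg)
qed

lemma poincare_mat2: "poincare (mat2 a b c e) (z,t) =
  (((a*z+b)*cnj(c*z+e) + a*cnj c * of_real(t\<^sup>2)) / of_real ((cmod (c*z+e))\<^sup>2 + (cmod c)\<^sup>2 * t\<^sup>2),
   t / ((cmod (c*z+e))\<^sup>2 + (cmod c)\<^sup>2 * t\<^sup>2))"
  by (simp add: poincare_def Let_def)

lemma poincare_denominator_pos:
  assumes "a*e - b*c = 1" "t > 0"
  shows "(cmod (c*z+e))\<^sup>2 + (cmod c)\<^sup>2 * t\<^sup>2 > 0"
proof (cases "c = 0")
  case True
  with assms(1) show ?thesis by auto
next
  case False
  with assms(2) have "(cmod c)\<^sup>2 * t\<^sup>2 > 0" by simp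
  then show ?thesis by (smt (verit) zero_le_power2)
qed

lemma snd_poincare_pos:
  assumes "det g = 1" "t > 0"
  shows "snd (poincare g (z,t)) > 0"
proof -
  obtain a b c e where g: "g = mat2 a b c e" by (rule mat2_cases)
  with assms poincare_denominator_pos[of a e b c t z] show ?thesis
    by (simp add: poincare_mat2 det_mat2)
qed

text \<open>The determinant \<open>\<tau> = t\<^sup>2\<close> of \<open>point_matrix (z, t)\<close> is preserved by \<open>M \<mapsto> cnj g M g\<^sup>T\<close>.\<close>
lemma poincare_det_identity:
  fixes a b c e z \<tau> :: complex
  assumes "a*e - b*c = 1" "cnj \<tau> = \<tau>"
  shows "((a*z+b)*cnj(c*z+e) + a*cnj c*\<tau>) * cnj ((a*z+b)*cnj(c*z+e) + a*cnj c*\<tau>) + \<tau>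
       = ((c*z+e)*cnj(c*z+e) + c*cnj c*\<tau>) * ((a*z+b)*cnj(a*z+b) + a*cnj a*\<tau>)"
proof -
  have det': "cnj a * cnj e - cnj b * cnj c = 1"
    using arg_cong[OF assms(1), of cnj] by simp
  have "((c*z+e)*cnj(c*z+e) + c*cnj c*\<tau>) * ((a*z+b)*cnj(a*z+b) + a*cnj a*\<tau>)
     - ((a*z+b)*cnj(c*z+e) + a*cnj c*\<tau>) * cnj ((a*z+b)*cnj(c*z+e) + a*cnj c*\<tau>)
     = \<tau> * (a*e - b*c) * (cnj a * cnj e - cnj b * cnj c)"
    unfolding complex_cnj_mult complex_cnj_add complex_cnj_cnj assms(2) by algebra
  then show ?thesis unfolding assms(1) det' by (simp add: diff_eq_eq)
qed

lemma point_matrix_poincare: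
  assumes "det g = 1" "t > 0"
  obtains D :: real where "D > 0"
    "cnj_mat g ** point_matrix (z,t) ** transpose g = D *\<^sub>R point_matrix (poincare g (z,t))"
proof -
  obtain a b c e where g: "g = mat2 a b c e" by (rule mat2_cases)
  have det: "a*e - b*c = 1" using assms(1) by (simp add: g det_mat2)
  define \<alpha> where "\<alpha> = a*z+b"
  define \<gamma> where "\<gamma> = c*z+e"
  define \<tau> where "\<tau> = complex_of_real (t\<^sup>2)"
  define N where "N = \<alpha>*cnj \<gamma> + a*cnj c*\<tau>"
  define D where "D = (cmod \<gamma>)\<^sup>2 + (cmod c)\<^sup>2 * t\<^sup>2"
  have "D > 0" unfolding D_def \<gamma>_def using poincare_denominator_pos[OF det assms(2)] .
  then have D0: "complex_of_real D \<noteq> 0" by simp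
  have P: "poincare (mat2 a b c e) (z,t) = (N / of_real D, t / D)"
    unfolding poincare_mat2 N_def D_def \<alpha>_def \<gamma>_def \<tau>_def ..
  have \<tau>: "cnj \<tau> = \<tau>" unfolding \<tau>_def by simp
  have D: "complex_of_real D = \<gamma>*cnj \<gamma> + c*cnj c*\<tau>"
    unfolding D_def \<tau>_def of_real_add of_real_mult complex_norm_square ..
  have N: "N * cnj N + \<tau> = of_real D * (\<alpha>*cnj \<alpha> + a*cnj a*\<tau>)"
    unfolding D N_def \<alpha>_def \<gamma>_def by (rule poincare_det_identity[OF det \<tau>])
  have "of_real D * of_real ((cmod (N / of_real D))\<^sup>2 + (t / D)\<^sup>2) = (N * cnj N + \<tau>) / of_real D"
    unfolding of_real_add complex_norm_square \<tau>_def using D0 by (simp add: field_simps power2_eq_square)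
  then have entry11: "of_real D * of_real ((cmod (N / of_real D))\<^sup>2 + (t / D)\<^sup>2) = \<alpha>*cnj \<alpha> + a*cnj a*\<tau>"
    unfolding N using D0 by simp
  have zt: "complex_of_real ((cmod z)\<^sup>2 + t\<^sup>2) = z * cnj z + \<tau>"
    unfolding \<tau>_def of_real_add complex_norm_square ..
  have c1: "of_real D * cnj (N / of_real D) = cnj N" and c2: "of_real D * (N / of_real D) = N"
    using D0 by simp_all
  have "cnj_mat g ** point_matrix (z,t) ** transpose g = D *\<^sub>R point_matrix (poincare g (z,t))"
    unfolding g P point_matrix_def fst_conv snd_conv scaleR_mat2 cnj_mat_mat2 transpose_mat2 mat2_mult
      mat2_eq_iff entry11 zt c1 c2 mult_1_right
    unfolding D N_def \<alpha>_def \<gamma>_def complex_cnj_mult complex_cnj_add complex_cnj_cnj \<tau>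
    by (intro conjI; algebra)
  with \<open>D > 0\<close> that show ?thesis by blast
qed

lemma hplane_iff_trace:
  assumes "hermitian2 X"
  shows "(z,t) \<in> hplane X \<longleftrightarrow> t > 0 \<and> trace (X ** point_matrix (z,t)) = 0"
proof -
  obtain x w y where X: "X = mat2 (of_real x) y (cnj y) (of_real w)"
    using assms by (rule hermitian2E)
  have "trace (X ** point_matrix (z,t)) =
      of_real (Re (X$1$1) * ((cmod z)\<^sup>2 + t\<^sup>2) + 2 * Re (z * X$1$2) + Re (X$2$2))"
    unfolding X trace_def sum_2 point_matrix_def mat2_mult
    by (simp add: complex_eq_iff algebra_simps)
  then have "trace (X ** point_matrix (z,t)) = 0 \<longleftrightarrow>
      Re (X$1$1) * ((cmod z)\<^sup>2 + t\<^sup>2) + 2 * Re (z * X$1$2) + Re (X$2$2) = 0"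
    by (simp only: of_real_eq_0_iff)
  then show ?thesis by (simp add: hplane_def)
qed

lemma poincare_in_hplane_iff:
  assumes "det g = 1" "hermitian2 X" "t > 0"
  shows "poincare g (z,t) \<in> hplane X \<longleftrightarrow> (z,t) \<in> hplane (pullback g X)"
proof -
  obtain D where D: "D > 0"
    "cnj_mat g ** point_matrix (z,t) ** transpose g = D *\<^sub>R point_matrix (poincare g (z,t))"
    using point_matrix_poincare[OF assms(1,3)] .
  obtain z' t' where p': "poincare g (z,t) = (z',t')" by fastforce
  have "t' > 0" using snd_poincare_pos[OF assms(1,3), of z] p' by simp
  have "D *\<^sub>R trace (X ** point_matrix (z',t')) = trace (X ** (cnj_mat g ** point_matrix (z,t) ** transpose g))"
    using D(2) p' by (simp add: matrix_mul_scaleR_right trace_scaleR)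
  also have "\<dots> = trace ((X ** cnj_mat g ** point_matrix (z,t)) ** transpose g)"
    by (simp add: matrix_mul_assoc)
  also have "\<dots> = trace (transpose g ** (X ** cnj_mat g ** point_matrix (z,t)))"
    by (rule trace_mul_sym)
  also have "\<dots> = trace (pullback g X ** point_matrix (z,t))"
    by (simp add: pullback_def matrix_mul_assoc)
  finally have "D *\<^sub>R trace (X ** point_matrix (z',t')) = trace (pullback g X ** point_matrix (z,t))" .
  with D(1) \<open>t' > 0\<close> assms(3) show ?thesis
    unfolding p' hplane_iff_trace[OF assms(2)] hplane_iff_trace[OF hermitian2_pullback[OF assms(2)]]
    by auto
qed

lemma mat_1_eq_mat2: "mat 1 = mat2 1 0 0 1"
  by (simp add: mat2_def mat_def vec_eq_iff forall_2)

lemma poincare_poincare_adjugate: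
  assumes "a*e - b*c = 1" "t > 0"
  shows "poincare (mat2 a b c e) (poincare (mat2 e (-b) (-c) a) (z,t)) = (z,t)"
proof -
  let ?g = "mat2 a b c e" and ?h = "mat2 e (-b) (-c) a"
  have det: "det ?g = 1" "det ?h = 1" using assms(1) by (simp_all add: det_mat2 algebra_simps)
  obtain z1 t1 where p1: "poincare ?h (z,t) = (z1,t1)" by fastforce
  have "t1 > 0" using snd_poincare_pos[OF det(2) assms(2), of z] p1 by simp
  obtain z2 t2 where p2: "poincare ?g (z1,t1) = (z2,t2)" by fastforce
  have "t2 > 0" using snd_poincare_pos[OF det(1) \<open>t1 > 0\<close>, of z1] p2 by simp
  obtain D1 where D1: "cnj_mat ?h ** point_matrix (z,t) ** transpose ?h = D1 *\<^sub>R point_matrix (z1,t1)"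
    using point_matrix_poincare[OF det(2) assms(2), of z] p1 by metis
  obtain D2 where D2: "cnj_mat ?g ** point_matrix (z1,t1) ** transpose ?g = D2 *\<^sub>R point_matrix (z2,t2)"
    using point_matrix_poincare[OF det(1) \<open>t1 > 0\<close>, of z1] p2 by metis
  have "cnj a * cnj e - cnj b * cnj c = 1"
    using arg_cong[OF assms(1), of cnj] by simp
  then have inv: "cnj_mat ?g ** cnj_mat ?h = mat 1" "transpose ?h ** transpose ?g = mat 1"
    using assms(1) unfolding mat_1_eq_mat2 cnj_mat_mat2 transpose_mat2 mat2_mult mat2_eq_iff
    by (simp_all add: algebra_simps)
  have "point_matrix (z,t) = cnj_mat ?g ** (cnj_mat ?h ** point_matrix (z,t) ** transpose ?h) ** transpose ?g"
    by (simp add: matrix_mul_assoc inv) (simp flip: matrix_mul_assoc add: inv)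
  also have "\<dots> = (D1 * D2) *\<^sub>R point_matrix (z2,t2)"
    by (simp add: D1 D2 matrix_mul_scaleR_right matrix_mul_scaleR_left)
  finally have P: "point_matrix (z,t) = (D1 * D2) *\<^sub>R point_matrix (z2,t2)" .
  have "D1 * D2 = 1"
    using arg_cong[OF P, of "\<lambda>M. M$2$2"] unfolding vector_scaleR_component
    by (simp add: point_matrix_def scaleR_conv_of_real flip: of_real_mult)
  with P have "point_matrix (z,t) = point_matrix (z2,t2)" by simp
  then have "(z,t) = (z2,t2)" using point_matrix_inj assms(2) \<open>t2 > 0\<close> by blast
  with p1 p2 show ?thesis by simp
qed

section \<open>The Lorentzian inner product\<close>

text \<open>The polarisation of \<open>- det\<close>, a Lorentzian inner product on Hermitian matrices.\<close>

definition herm_inner :: "complex^2^2 \<Rightarrow> complex^2^2 \<Rightarrow> complex" where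
  "herm_inner X Y = - (X$1$1 * Y$2$2 + X$2$2 * Y$1$1 - X$1$2 * Y$2$1 - X$2$1 * Y$1$2) / 2"

lemma herm_inner_self: "herm_inner X X = - det X"
  by (simp add: herm_inner_def det_2 field_simps)

lemma herm_inner_scaleR_right: "herm_inner X (l *\<^sub>R Y) = of_real l * herm_inner X Y"
  by (simp only: herm_inner_def vector_scaleR_component) (simp add: scaleR_conv_of_real field_simps)

lemma Im_herm_inner_hermitian:
  assumes "hermitian2 X" "hermitian2 Y"
  shows "Im (herm_inner X Y) = 0"
proof -
  obtain a c b where "X = mat2 (of_real a) b (cnj b) (of_real c)" using assms(1) by (rule hermitian2E)
  moreover obtain a' c' b' where "Y = mat2 (of_real a') b' (cnj b') (of_real c')" using assms(2) by (rule hermitian2E)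
  ultimately show ?thesis by (simp add: herm_inner_def)
qed

text \<open>At a common point \<open>(z, t)\<close> the plane equation eliminates the lower right entry, and
  \<open>X = [[a, b], [cnj b, c]]\<close> becomes the Euclidean vector \<open>(Re b + a Re z, Im b - a Im z, t a)\<close>.\<close>
lemma herm_inner_at_common_point:
  assumes "hermitian2 X" "hermitian2 Y" "(z,t) \<in> hplane X" "(z,t) \<in> hplane Y"
  obtains u v :: "real \<times> real \<times> real" where
    "Re (- det X) = u \<bullet> u" "Re (- det Y) = v \<bullet> v" "Re (herm_inner X Y) = u \<bullet> v" "u = v \<longrightarrow> X = Y"
proof -
  obtain a c b where X: "X = mat2 (of_real a) b (cnj b) (of_real c)" using assms(1) by (rule hermitian2E)
  obtain a' c' b' where Y: "Y = mat2 (of_real a') b' (cnj b') (of_real c')" using assms(2) by (rule hermitian2E)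
  have "t > 0" using assms(3) by (simp add: hplane_def)
  have plane: "c = - a * (Re z ^ 2 + Im z ^ 2 + t\<^sup>2) - 2 * (Re z * Re b - Im z * Im b)"
    "c' = - a' * (Re z ^ 2 + Im z ^ 2 + t\<^sup>2) - 2 * (Re z * Re b' - Im z * Im b')"
    using assms(3,4) by (simp_all add: hplane_def X Y cmod_power2 algebra_simps)
  define u where "u = (Re b + a * Re z, Im b - a * Im z, t * a)"
  define v where "v = (Re b' + a' * Re z, Im b' - a' * Im z, t * a')"
  show ?thesis
  proof (rule that[of u v])
    show "Re (- det X) = u \<bullet> u"
      unfolding X det_mat2 u_def plane by (simp add: power2_eq_square algebra_simps)
    show "Re (- det Y) = v \<bullet> v"
      unfolding Y det_mat2 v_def plane by (simp add: power2_eq_square algebra_simps)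
    show "Re (herm_inner X Y) = u \<bullet> v"
      unfolding X Y herm_inner_def u_def v_def plane by (simp add: power2_eq_square field_simps)
    show "u = v \<longrightarrow> X = Y"
    proof
      assume "u = v"
      then have "a' = a" "b' = b"
        using \<open>t > 0\<close> by (auto simp: u_def v_def complex_eq_iff)
      then show "X = Y"
        unfolding X Y plane by simp
    qed
  qed
qed

lemma herm_inner_sq_le_at_common_point:
  assumes "hermitian2 X" "hermitian2 Y" "p \<in> hplane X" "p \<in> hplane Y"
  shows "(Re (herm_inner X Y))\<^sup>2 \<le> Re (- det X) * Re (- det Y)"
proof -
  obtain z t where p: "p = (z,t)" by fastforce
  obtain u v :: "real \<times> real \<times> real" where "Re (- det X) = u \<bullet> u" "Re (- det Y) = v \<bullet> v" "Re (herm_inner X Y) = u \<bullet> v"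
    and "u = v \<longrightarrow> X = Y"
    by (rule herm_inner_at_common_point[OF assms(1,2) assms(3,4)[unfolded p]])
  then show ?thesis using Cauchy_Schwarz_ineq[of u v] by simp
qed

lemma eq_if_herm_inner_eq_at_common_point:
  assumes "hermitian2 X" "hermitian2 Y" "p \<in> hplane X" "p \<in> hplane Y"
    and "Re (herm_inner X Y) = Re (- det X)" "Re (- det Y) = Re (- det X)"
  shows "X = Y"
proof -
  obtain z t where p: "p = (z,t)" by fastforce
  obtain u v :: "real \<times> real \<times> real" where uv: "Re (- det X) = u \<bullet> u" "Re (- det Y) = v \<bullet> v" "Re (herm_inner X Y) = u \<bullet> v"
    and eq: "u = v \<longrightarrow> X = Y"
    by (rule herm_inner_at_common_point[OF assms(1,2) assms(3,4)[unfolded p]])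
  have "(u - v) \<bullet> (u - v) = u \<bullet> u - 2 * (u \<bullet> v) + v \<bullet> v"
    by (simp add: inner_diff_left inner_diff_right inner_commute)
  also have "\<dots> = 0" using assms(5,6) uv by simp
  finally show ?thesis using eq by simp
qed

section \<open>Forms with a common null cone\<close>

lemma hform_line:
  fixes s :: real
  shows "hform X (p1 + of_real s * p2, q1 + of_real s * q2) =
    hform X (p1,q1) + of_real s * (hform X (p1+p2, q1+q2) - hform X (p1,q1) - hform X (p2,q2))
      + of_real s * of_real s * hform X (p2,q2)"
  unfolding hform_pair complex_cnj_add complex_cnj_mult complex_cnj_complex_of_real
  by algebra

lemma quadratic_two_nonzero_roots:
  fixes A B C :: real
  assumes "A * C < 0"
  obtains s1 s2 where "s1 \<noteq> s2" "s1 \<noteq> 0" "s2 \<noteq> 0"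
    "C + B * s1 + A * s1 * s1 = 0" "C + B * s2 + A * s2 * s2 = 0"
proof -
  have A: "A \<noteq> 0" and C: "C \<noteq> 0" using assms by auto
  define r where "r = sqrt (B*B - 4*A*C)"
  have "B*B \<ge> 0" by simp
  with assms have "B*B - 4*A*C > 0" by linarith
  then have r: "r > 0" "r*r = B*B - 4*A*C" unfolding r_def by (auto intro: real_sqrt_mult_self)
  define s1 where "s1 = (-B + r)/(2*A)"
  define s2 where "s2 = (-B - r)/(2*A)"
  have "4*A*(C + B * s1 + A * s1 * s1) = r*r - (B*B - 4*A*C)"
    unfolding s1_def using A by (simp add: field_simps power2_eq_square)
  moreover have "4*A*(C + B * s2 + A * s2 * s2) = r*r - (B*B - 4*A*C)"
    unfolding s2_def using A by (simp add: field_simps power2_eq_square)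
  ultimately have roots: "C + B * s1 + A * s1 * s1 = 0" "C + B * s2 + A * s2 * s2 = 0"
    using r(2) A by simp_all
  moreover have "s1 \<noteq> s2" unfolding s1_def s2_def using A r(1) by (simp add: field_simps)
  moreover have "s1 \<noteq> 0" "s2 \<noteq> 0" using roots C by auto
  ultimately show ?thesis using that by blast
qed

text \<open>The real quadratic \<open>s \<mapsto> Re (hform X (v\<^sub>1 + s v\<^sub>2))\<close> changes sign, so it has two
  distinct nonzero roots; there the quadratic \<open>s \<mapsto> Re (hform Z (v\<^sub>1 + s v\<^sub>2))\<close>, which has no
  constant term, vanishes as well, hence so does its leading coefficient.\<close>
lemma Re_hform_eq_0_if_opposite_signs:
  assumes null: "\<And>v. Re (hform X v) = 0 \<Longrightarrow> Re (hform Z v) = 0"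
    and sign: "Re (hform X v1) * Re (hform X v2) < 0"
    and zero: "Re (hform Z v1) = 0"
  shows "Re (hform Z v2) = 0"
proof -
  obtain p1 q1 p2 q2 where v: "v1 = (p1,q1)" "v2 = (p2,q2)" by fastforce
  define A where "A = Re (hform X v2)"
  define B where "B = Re (hform X (p1+p2, q1+q2) - hform X v1 - hform X v2)"
  define C where "C = Re (hform X v1)"
  define AZ where "AZ = Re (hform Z v2)"
  define BZ where "BZ = Re (hform Z (p1+p2, q1+q2) - hform Z v1 - hform Z v2)"
  have "A * C < 0" using sign unfolding A_def C_def by (simp add: mult.commute)
  then obtain s1 s2 where s: "s1 \<noteq> s2" "s1 \<noteq> 0" "s2 \<noteq> 0"
    "C + B * s1 + A * s1 * s1 = 0" "C + B * s2 + A * s2 * s2 = 0"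
    by (rule quadratic_two_nonzero_roots)
  have "Re (hform X (p1 + of_real s * p2, q1 + of_real s * q2)) = C + B * s + A * s * s"
    and "Re (hform Z (p1 + of_real s * p2, q1 + of_real s * q2)) = (BZ + AZ * s) * s" for s
    unfolding hform_line A_def B_def C_def AZ_def BZ_def v using zero[unfolded v]
    by (simp_all add: algebra_simps)
  with null s(4,5) have "(BZ + AZ * s1) * s1 = 0" "(BZ + AZ * s2) * s2 = 0"
    by metis+
  with s(2,3) have "BZ + AZ * s1 = 0" "BZ + AZ * s2 = 0" by simp_all
  moreover have "AZ * (s1 - s2) = (BZ + AZ * s1) - (BZ + AZ * s2)" by (simp add: algebra_simps)
  ultimately have "AZ * (s1 - s2) = 0" by simp
  with s(1) show ?thesis unfolding AZ_def by simp
qed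

lemma hform_neg_exists:
  assumes "hermitian2 X" "Re (det X) < 0"
  obtains v where "Re (hform X v) < 0"
proof -
  obtain a c b where X: "X = mat2 (of_real a) b (cnj b) (of_real c)" using assms(1) by (rule hermitian2E)
  have b: "b * cnj b = of_real ((cmod b)\<^sup>2)" by (rule complex_norm_square[symmetric])
  have det: "a * c - (cmod b)\<^sup>2 < 0"
    using assms(2) unfolding X det_mat2 cmod_power2 by (simp add: power2_eq_square)
  consider "a < 0" | "a > 0" | "a = 0" by linarith
  then show ?thesis
  proof cases
    case 1
    then have "Re (hform X (1,0)) < 0" unfolding X hform_mat2 by simp
    then show ?thesis by (rule that)
  next
    case 2
    have "hform X (- cnj b / of_real a, 1) = of_real ((a * c - (cmod b)\<^sup>2) / a)"
      unfolding X hform_mat2 using 2 by (simp add: field_simps b)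
    then have "Re (hform X (- cnj b / of_real a, 1)) < 0"
      using 2 det by (simp add: divide_neg_pos)
    then show ?thesis by (rule that)
  next
    case 3
    with det have "b \<noteq> 0" by auto
    with 3 have "hform X (- (of_real c + 1) / (2 * b), 1) = -1"
      unfolding X hform_mat2 by (simp add: field_simps)
    then have "Re (hform X (- (of_real c + 1) / (2 * b), 1)) < 0" by simp
    then show ?thesis by (rule that)
  qed
qed

lemma hermitian_eq_0_if_Re_hform_eq_0:
  assumes "hermitian2 Z" "\<And>v. Re (hform Z v) = 0"
  shows "Z = 0"
proof -
  obtain a c b where Z: "Z = mat2 (of_real a) b (cnj b) (of_real c)" using assms(1) by (rule hermitian2E)
  have "hform Z v = 0" for v
    using hform_hermitian_real[OF assms(1), of v] assms(2)[of v] by simp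
  from this[of "(1,0)"] this[of "(0,1)"] this[of "(1,1)"] this[of "(1,\<i>)"] have "a = 0" "c = 0" "b = 0"
    unfolding Z hform_mat2 by (simp_all add: complex_eq_iff)
  then show ?thesis by (simp add: Z mat2_def vec_eq_iff forall_2)
qed

lemma hermitian_eq_scaleR_if_null_cone_subset:
  assumes X: "hermitian2 X" "Re (det X) < 0" and "hermitian2 Y"
    and null: "\<And>v. Re (hform X v) = 0 \<Longrightarrow> Re (hform Y v) = 0"
  obtains l where "Y = l *\<^sub>R X"
proof -
  obtain v0 where v0: "Re (hform X v0) < 0" using X by (rule hform_neg_exists)
  have "hermitian2 (-X)" "Re (det (-X)) < 0"
    using X by (simp_all add: hermitian2_def conj_transpose_def vec_eq_iff det_2)
  then obtain v1 where v1: "Re (hform X v1) > 0"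
    by (rule hform_neg_exists) (simp add: hform_def case_prod_unfold algebra_simps)
  define l where "l = Re (hform Y v0) / Re (hform X v0)"
  define Z where "Z = Y - l *\<^sub>R X"
  have Z: "Re (hform Z v) = Re (hform Y v) - l * Re (hform X v)" for v
    by (simp add: Z_def hform_diff hform_scaleR)
  have Z_null: "Re (hform X v) = 0 \<Longrightarrow> Re (hform Z v) = 0" for v
    using null Z by simp
  have "Re (hform Z v0) = 0" using v0 by (simp add: Z l_def)
  then have "Re (hform Z v1) = 0"
    using Re_hform_eq_0_if_opposite_signs[of X Z v0 v1, OF Z_null] v0 v1
    by (simp add: mult_neg_pos)
  have "Re (hform Z v) = 0" for v
  proof (cases "Re (hform X v)" "0 :: real" rule: linorder_cases)
    case less
    with Re_hform_eq_0_if_opposite_signs[of X Z v1 v, OF Z_null] v1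
      \<open>Re (hform Z v1) = 0\<close> show ?thesis by (simp add: mult_pos_neg)
  next
    case equal
    then show ?thesis by (rule Z_null)
  next
    case greater
    with Re_hform_eq_0_if_opposite_signs[of X Z v0 v, OF Z_null] v0
      \<open>Re (hform Z v0) = 0\<close> show ?thesis by (simp add: mult_neg_pos)
  qed
  moreover have "hermitian2 Z"
    using X(1) \<open>hermitian2 Y\<close> by (simp add: Z_def hermitian2_def conj_transpose_def vec_eq_iff)
  ultimately have "Z = 0" by (rule hermitian_eq_0_if_Re_hform_eq_0[rotated])
  then show ?thesis using that[of l] by (simp add: Z_def)
qed

section \<open>Embedding and orientability from the gap condition\<close>

lemma det_scaleR_mat:
  fixes X :: "complex^2^2"
  shows "det (l *\<^sub>R X) = of_real (l\<^sup>2) * det X"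
  by (simp only: det_2 vector_scaleR_component) (simp add: scaleR_conv_of_real power2_eq_square algebra_simps)

lemma det_Gamma: "g \<in> Gamma d \<Longrightarrow> det g = 1"
  by (simp add: Gamma_def)

lemma GammaE:
  assumes "g \<in> Gamma d"
  obtains a b c e where "g = mat2 a b c e" "a*e - b*c = 1"
    "a \<in> ring_of_integers d" "b \<in> ring_of_integers d" "c \<in> ring_of_integers d" "e \<in> ring_of_integers d"
proof -
  obtain a b c e where g: "g = mat2 a b c e" by (rule mat2_cases)
  from assms have "\<forall>i j. g$i$j \<in> ring_of_integers d" "det g = 1" by (auto simp: Gamma_def)
  with g that show ?thesis by (metis det_mat2 mat2_nth)
qed

lemma adjugate_in_Gamma:
  assumes "mat2 a b c e \<in> Gamma d"
  shows "mat2 e (-b) (-c) a \<in> Gamma d"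
  using assms by (elim GammaE) (auto simp: Gamma_def mat2_eq_iff det_mat2 forall_2 algebra_simps)

lemma Re_hform_pullback_eq_0_if_preserves_circle:
  assumes g: "det g = 1" and X: "hermitian2 X"
    and circle: "moebius g ` circle_of X \<subseteq> circle_of X"
    and v: "Re (hform X v) = 0"
  shows "Re (hform (pullback g X) v) = 0"
proof (cases "v = (0,0)")
  case True
  then show ?thesis by (simp add: hform_pair)
next
  case False
  obtain c :: real where c: "c > 0" "\<And>Z. hform Z v = of_real c * hform Z (hom (dehom v))"
    using hform_hom_dehom[OF False] by blast
  obtain c' :: real where c': "c' > 0"
    "\<And>Z. hform (pullback g Z) (hom (dehom v)) = of_real c' * hform Z (hom (moebius g (dehom v)))"
    using hform_pullback_hom[OF g] by blast
  have "hform X v = 0" using hform_hermitian_real[OF X, of v] v by simp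
  with c have "dehom v \<in> circle_of X"
    by (simp add: circle_of_def)
  with circle have "hform X (hom (moebius g (dehom v))) = 0"
    unfolding circle_of_def by blast
  with c(2) c'(2) show ?thesis by simp
qed

lemma pullback_eq_neg_scaleR_if_swaps_sides:
  assumes g: "det g = 1" and X: "hermitian2 X" "Re (det X) < 0"
    and circle: "moebius g ` circle_of X \<subseteq> circle_of X"
    and sides: "moebius g ` neg_side X \<subseteq> pos_side X"
  obtains l where "l < 0" "pullback g X = l *\<^sub>R X"
proof -
  have "Re (hform (pullback g X) v) = 0" if "Re (hform X v) = 0" for v
    using Re_hform_pullback_eq_0_if_preserves_circle[OF g X(1) circle that] .
  then obtain l where l: "pullback g X = l *\<^sub>R X"
    by (rule hermitian_eq_scaleR_if_null_cone_subset[OF X hermitian2_pullback[OF X(1)]])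
  obtain v where v: "Re (hform X v) < 0" using X by (rule hform_neg_exists)
  then have "v \<noteq> (0,0)" by (auto simp: hform_pair)
  then obtain c :: real where "c > 0" "\<And>Z. hform Z v = of_real c * hform Z (hom (dehom v))"
    using hform_hom_dehom[of v] by blast
  with v have "Re (hform X (hom (dehom v))) < 0"
    by (simp add: mult_less_0_iff)
  then have "dehom v \<in> neg_side X" by (simp add: neg_side_def)
  with sides have "Re (hform X (hom (moebius g (dehom v)))) > 0"
    by (auto simp: pos_side_def)
  moreover obtain c' :: real where "c' > 0"
    "\<And>Z. hform (pullback g Z) (hom (dehom v)) = of_real c' * hform Z (hom (moebius g (dehom v)))"
    using hform_pullback_hom[OF g] by blast
  ultimately have "Re (hform (pullback g X) (hom (dehom v))) > 0" by simp
  with \<open>Re (hform X (hom (dehom v))) < 0\<close> have "l < 0"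
    unfolding l hform_scaleR by (simp add: zero_less_mult_iff)
  with l that show ?thesis by blast
qed

lemma pullback_eq_if_hplane_meets_image:
  assumes g: "g \<in> Gamma d" and X: "hermitian2 X" "Re (det X) < 0"
    and gap: "Re (herm_inner X (pullback g X)) \<notin> {Re (det X)..<- Re (det X)}"
    and p: "p \<in> hplane X" "poincare g p \<in> hplane X"
  shows "pullback g X = X"
proof -
  obtain z t where zt: "p = (z,t)" by fastforce
  with p have "t > 0" by (simp add: hplane_def)
  have Y: "hermitian2 (pullback g X)" using X(1) by (rule hermitian2_pullback)
  have det: "det (pullback g X) = det X" using det_Gamma[OF g] by (simp add: det_pullback)
  have "p \<in> hplane (pullback g X)"
    using p(2) poincare_in_hplane_iff[OF det_Gamma[OF g] X(1) \<open>t > 0\<close>] zt by simp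
  then have "(Re (herm_inner X (pullback g X)))\<^sup>2 \<le> (Re (det X))\<^sup>2"
    using herm_inner_sq_le_at_common_point[OF X(1) Y p(1)] det by (simp add: power2_eq_square)
  then have "\<bar>Re (herm_inner X (pullback g X))\<bar> \<le> \<bar>Re (det X)\<bar>"
    by (simp only: abs_le_square_iff)
  with gap X(2) have "Re (herm_inner X (pullback g X)) = Re (- det X)" by auto
  then show ?thesis
    using eq_if_herm_inner_eq_at_common_point[OF X(1) Y p(1) \<open>p \<in> hplane (pullback g X)\<close>] det
    by simp
qed

lemma poincare_hplane_subset:
  assumes "det g = 1" "hermitian2 X" "pullback g X = X"
  shows "poincare g ` hplane X \<subseteq> hplane X"
proof
  fix q assume "q \<in> poincare g ` hplane X"
  then obtain z t where zt: "(z,t) \<in> hplane X" "q = poincare g (z,t)" by auto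
  then have "t > 0" by (simp add: hplane_def)
  with zt assms show "q \<in> hplane X" by (simp add: poincare_in_hplane_iff)
qed

lemma embedded_surface_if_gap:
  assumes X: "hermitian2 X" "Re (det X) < 0"
    and gap: "\<And>g. g \<in> Gamma d \<Longrightarrow> Re (herm_inner X (pullback g X)) \<notin> {Re (det X)..<- Re (det X)}"
  shows "embedded_surface d X"
  unfolding embedded_surface_def
proof
  fix g assume "g \<in> Gamma d"
  then obtain a b c e where g: "g = mat2 a b c e" "a*e - b*c = 1" by (elim GammaE)
  let ?h = "mat2 e (-b) (-c) a"
  have h: "?h \<in> Gamma d" "det ?h = 1" "e*a - (-b)*(-c) = 1"
    using adjugate_in_Gamma \<open>g \<in> Gamma d\<close> g by (auto simp: det_mat2 algebra_simps)
  show "poincare g ` hplane X = hplane X \<or> poincare g ` hplane X \<inter> hplane X = {}"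
  proof (rule disjCI)
    assume "poincare g ` hplane X \<inter> hplane X \<noteq> {}"
    then obtain z t where p: "(z,t) \<in> hplane X" "poincare g (z,t) \<in> hplane X" by auto
    then have "t > 0" by (simp add: hplane_def)
    have g_fix: "pullback g X = X"
      using pullback_eq_if_hplane_meets_image[OF \<open>g \<in> Gamma d\<close> X gap p] \<open>g \<in> Gamma d\<close> .
    have "poincare ?h (poincare g (z,t)) = (z,t)"
      using poincare_poincare_adjugate[OF h(3) \<open>t > 0\<close>, of z] g(1) by simp
    then have h_fix: "pullback ?h X = X"
      using pullback_eq_if_hplane_meets_image[OF h(1) X gap p(2)] h(1) p(1) by simp
    have "hplane X \<subseteq> poincare g ` hplane X"
    proof
      fix q assume q: "q \<in> hplane X"
      obtain z' t' where q': "q = (z',t')" by fastforce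
      with q have "t' > 0" by (simp add: hplane_def)
      then have "poincare g (poincare ?h q) = q"
        using poincare_poincare_adjugate[OF g(2)] q' g(1) by simp
      moreover have "poincare ?h q \<in> hplane X"
        using poincare_hplane_subset[OF h(2) X(1) h_fix] q by blast
      ultimately show "q \<in> poincare g ` hplane X" by (metis image_eqI)
    qed
    with poincare_hplane_subset[OF det_Gamma[OF \<open>g \<in> Gamma d\<close>] X(1) g_fix]
    show "poincare g ` hplane X = hplane X" by blast
  qed
qed

lemma orientable_surface_if_gap:
  assumes X: "hermitian2 X" "Re (det X) < 0"
    and gap: "\<And>g. g \<in> Gamma d \<Longrightarrow> Re (herm_inner X (pullback g X)) \<notin> {Re (det X)..<- Re (det X)}"
  shows "orientable_surface d X"
  unfolding orientable_surface_def
proof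
  assume "\<exists>g\<in>Gamma d. moebius g ` circle_of X = circle_of X \<and>
    moebius g ` neg_side X = pos_side X \<and> moebius g ` pos_side X = neg_side X"
  then obtain g where g: "g \<in> Gamma d" "moebius g ` circle_of X \<subseteq> circle_of X"
    "moebius g ` neg_side X \<subseteq> pos_side X" by auto
  obtain l where l: "l < 0" "pullback g X = l *\<^sub>R X"
    by (rule pullback_eq_neg_scaleR_if_swaps_sides[OF det_Gamma[OF g(1)] X g(2,3)])
  have "of_real (l\<^sup>2) * det X = det X"
    using det_pullback[of g X] det_Gamma[OF g(1)] by (simp add: l(2) det_scaleR_mat)
  moreover have "det X \<noteq> 0" using X(2) by auto
  ultimately have "complex_of_real (l\<^sup>2) = 1" by (metis mult_cancel_right2)
  then have "l\<^sup>2 = 1" by (simp only: of_real_eq_1_iff)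
  with l(1) have "l = -1" by (smt (verit) power2_eq_1_iff)
  then have "Re (herm_inner X (pullback g X)) = Re (det X)"
    by (simp only: l(2) herm_inner_scaleR_right herm_inner_self) simp
  with gap[OF g(1)] X(2) show False by simp
qed

section \<open>The arithmetic gap\<close>

definition form_matrix :: "int \<Rightarrow> int \<Rightarrow> int \<Rightarrow> int \<Rightarrow> int \<Rightarrow> complex^2^2" where
  "form_matrix d r a1 a2 b =
     mat2 (of_int (d*r*a1)) (of_int (r*b) * sqrt_neg d) (- (of_int (r*b) * sqrt_neg d)) (of_int (d*r*a2))"

lemma hermitian2_form_matrix: "hermitian2 (form_matrix d r a1 a2 b)"
  by (simp add: form_matrix_def hermitian2_mat2_iff)

lemma det_form_matrix:
  assumes "d \<ge> 0"
  shows "det (form_matrix d r a1 a2 b) = - of_int (r\<^sup>2 * d * (b\<^sup>2 - d*a1*a2))"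
  unfolding form_matrix_def det_mat2 using sqrt_neg_mult_self[OF assms]
  by (simp add: power2_eq_square algebra_simps) algebra

text \<open>Substitute \<open>cnj x = x - w n\<^sub>x\<close> for the entries of \<open>g\<close>, where \<open>w = \<surd>-d\<close>. Modulo \<open>w\<close>
  the inner product reduces, via \<open>g\<^sup>T J g = J\<close> for \<open>J = [[0, 1], [-1, 0]]\<close>, to \<open>2 B\<^sup>2\<close> (up to
  the factor \<open>-R\<^sup>2 w\<^sup>2\<close>); the bracket multiplying \<open>w\<close> is integral in the entries, \<open>n\<^sub>x\<close> and \<open>w\<close>.\<close>
lemma herm_inner_pullback_identity:
  fixes a b c e w n11 n12 n21 n22 A1 A2 B R :: complex
  assumes det: "a*e - b*c = 1"
    and cnj: "cnj a = a - w*n11" "cnj b = b - w*n12" "cnj c = c - w*n21" "cnj e = e - w*n22"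
  defines "X \<equiv> mat2 (-(w*w)*R*A1) (R*B*w) (-(R*B*w)) (-(w*w)*R*A2)"
    and "M11 \<equiv> A1*a*a + A2*c*c - w*(A1*a*n11 + A2*c*n21) + B*(a*n21 - c*n11)"
    and "M12 \<equiv> A1*a*b + A2*c*e - w*(A1*a*n12 + A2*c*n22) + B*(a*n22 - c*n12)"
    and "M21 \<equiv> A1*b*a + A2*e*c - w*(A1*b*n11 + A2*e*n21) + B*(b*n21 - e*n11)"
    and "M22 \<equiv> A1*b*b + A2*e*e - w*(A1*b*n12 + A2*e*n22) + B*(b*n22 - e*n12)"
  shows "2 * herm_inner X (pullback (mat2 a b c e) X) =
    R*R*(-(w*w))*(2*B*B - w*(- w*(A1*M22 + A2*M11) + B*(M12 - M21)))"
proof -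
  have two: "2 * (- x / 2) = - x" for x :: complex by simp
  show ?thesis
    unfolding X_def herm_inner_def pullback_mat2 mat2_nth cnj two M11_def M12_def M21_def M22_def
    using det by algebra
qed

lemma herm_inner_pullback_form_matrix_mod_sqrt_neg:
  assumes "d > 0" "g \<in> Gamma d"
  obtains Z where "Z \<in> ring_of_integers d"
    "2 * herm_inner (form_matrix d r a1 a2 b) (pullback g (form_matrix d r a1 a2 b))
       = of_int (r\<^sup>2 * d) * (2 * of_int (b\<^sup>2) - sqrt_neg d * Z)"
proof -
  let ?X = "form_matrix d r a1 a2 b"
  define w where "w = sqrt_neg d"
  have ww: "w * w = - of_int d" unfolding w_def using assms(1) by (simp add: sqrt_neg_mult_self)
  obtain g11 g12 g21 g22 where g: "g = mat2 g11 g12 g21 g22" and det: "g11*g22 - g12*g21 = 1"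
    and O: "g11 \<in> ring_of_integers d" "g12 \<in> ring_of_integers d"
      "g21 \<in> ring_of_integers d" "g22 \<in> ring_of_integers d"
    using assms(2) by (rule GammaE)
  obtain n11 n12 n21 n22 where n:
    "cnj g11 = g11 - w * of_int n11" "cnj g12 = g12 - w * of_int n12"
    "cnj g21 = g21 - w * of_int n21" "cnj g22 = g22 - w * of_int n22"
    using cnj_ring_of_integers[OF O(1)] cnj_ring_of_integers[OF O(2)]
      cnj_ring_of_integers[OF O(3)] cnj_ring_of_integers[OF O(4)] unfolding w_def by metis
  define A1 where "A1 = (of_int a1 :: complex)"
  define A2 where "A2 = (of_int a2 :: complex)"
  define B where "B = (of_int b :: complex)"
  define R where "R = (of_int r :: complex)"
  define M11 where "M11 = A1*g11*g11 + A2*g21*g21 - w*(A1*g11 * of_int n11 + A2*g21 * of_int n21) + B*(g11 * of_int n21 - g21 * of_int n11)"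
  define M12 where "M12 = A1*g11*g12 + A2*g21*g22 - w*(A1*g11 * of_int n12 + A2*g21 * of_int n22) + B*(g11 * of_int n22 - g21 * of_int n12)"
  define M21 where "M21 = A1*g12*g11 + A2*g22*g21 - w*(A1*g12 * of_int n11 + A2*g22 * of_int n21) + B*(g12 * of_int n21 - g22 * of_int n11)"
  define M22 where "M22 = A1*g12*g12 + A2*g22*g22 - w*(A1*g12 * of_int n12 + A2*g22 * of_int n22) + B*(g12 * of_int n22 - g22 * of_int n12)"
  define Z where "Z = - w*(A1*M22 + A2*M11) + B*(M12 - M21)"
  have "w \<in> ring_of_integers d" unfolding w_def by simp
  with O assms(1) have "Z \<in> ring_of_integers d"
    unfolding Z_def M11_def M12_def M21_def M22_def A1_def A2_def B_def by simp
  moreover have X: "?X = mat2 (-(w*w)*R*A1) (R*B*w) (-(R*B*w)) (-(w*w)*R*A2)"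
    unfolding form_matrix_def R_def A1_def A2_def B_def w_def ww[unfolded w_def] by (simp add: algebra_simps)
  have "2 * herm_inner ?X (pullback g ?X) = R*R*(-(w*w))*(2*B*B - w*Z)"
    unfolding X g Z_def M11_def M12_def M21_def M22_def by (rule herm_inner_pullback_identity[OF det n])
  then have "2 * herm_inner ?X (pullback g ?X) = of_int (r\<^sup>2 * d) * (2 * of_int (b\<^sup>2) - sqrt_neg d * Z)"
    by (simp add: ww R_def B_def power2_eq_square flip: w_def)
  ultimately show ?thesis by (rule that)
qed

lemma herm_inner_pullback_form_matrix:
  assumes "d > 0" "r \<noteq> 0" "g \<in> Gamma d"
  obtains n :: int where
    "2 * Re (herm_inner (form_matrix d r a1 a2 b) (pullback g (form_matrix d r a1 a2 b)))
       = of_int (r\<^sup>2 * d * (2 * b\<^sup>2 + d * n))"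
proof -
  let ?X = "form_matrix d r a1 a2 b"
  obtain Z where Z: "Z \<in> ring_of_integers d"
    and identity: "2 * herm_inner ?X (pullback g ?X) = of_int (r\<^sup>2 * d) * (2 * of_int (b\<^sup>2) - sqrt_neg d * Z)"
    using herm_inner_pullback_form_matrix_mod_sqrt_neg[OF assms(1,3)] by blast
  have "Im (2 * herm_inner ?X (pullback g ?X)) = 0"
    using Im_herm_inner_hermitian[OF hermitian2_form_matrix hermitian2_pullback[OF hermitian2_form_matrix]]
    by simp
  with assms(1,2) have "Im (sqrt_neg d * Z) = 0"
    unfolding identity by (simp add: power2_eq_square zero_less_mult_iff)
  then obtain n where wZ: "sqrt_neg d * Z = of_int (d * n)"
    using sqrt_neg_mult_real_in_ring_of_integers[OF assms(1) Z] by blast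
  have inner: "2 * herm_inner ?X (pullback g ?X) = of_int (r\<^sup>2 * d * (2 * b\<^sup>2 + d * (- n)))"
    unfolding identity wZ by (simp add: algebra_simps)
  have "2 * Re (herm_inner ?X (pullback g ?X)) = of_int (r\<^sup>2 * d * (2 * b\<^sup>2 + d * (- n)))"
    using arg_cong[OF inner, of Re] by simp
  then show ?thesis by (rule that)
qed

lemma int_mult_not_in_gap:
  fixes C k d n :: int
  assumes "C > 0" "k > 0" "4 * k < d"
  shows "C * (2*k + d*n) \<notin> {- (2*C*k) ..< 2*C*k}"
proof (cases n "0::int" rule: linorder_cases)
  case less
  then have "d * n \<le> d * (-1)" using assms by (intro mult_left_mono) auto
  with assms(3) have "2*k + d*n < - (2*k)" by linarith
  then have "C * (2*k + d*n) < C * (- (2*k))" using assms(1) by (rule mult_strict_left_mono)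
  then show ?thesis by simp
next
  case equal
  then show ?thesis by simp
next
  case greater
  with assms have "d * n > 0" by simp
  then have "C * (2*k) \<le> C * (2*k + d*n)" using assms(1) by (intro mult_left_mono) auto
  then show ?thesis by (simp add: algebra_simps)
qed

lemma form_matrix_gap:
  fixes d r a1 a2 b :: int
  assumes "d > 0" "r \<noteq> 0" "0 < b\<^sup>2 - d*a1*a2" "4 * (b\<^sup>2 - d*a1*a2) < d" "g \<in> Gamma d"
  defines "X \<equiv> form_matrix d r a1 a2 b"
  shows "Re (herm_inner X (pullback g X)) \<notin> {Re (det X)..<- Re (det X)}"
proof -
  define k where "k = b\<^sup>2 - d*a1*a2"
  define C where "C = r\<^sup>2 * d"
  obtain n where n: "2 * Re (herm_inner X (pullback g X)) = of_int (C * (2 * b\<^sup>2 + d * n))"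
    using herm_inner_pullback_form_matrix[OF assms(1,2,5)] unfolding X_def C_def by blast
  have "2 * b\<^sup>2 + d * n = 2 * k + d * (2*a1*a2 + n)" unfolding k_def by (simp add: algebra_simps)
  with n have inner: "2 * Re (herm_inner X (pullback g X)) = of_int (C * (2 * k + d * (2*a1*a2 + n)))"
    by simp
  have det: "2 * Re (det X) = - of_int (2 * C * k)"
    unfolding X_def det_form_matrix[OF less_imp_le[OF assms(1)]] k_def C_def by simp
  have "C > 0" using assms(1,2) unfolding C_def by simp
  then have "C * (2 * k + d * (2*a1*a2 + n)) \<notin> {- (2*C*k) ..< 2*C*k}"
    using assms(3,4) unfolding k_def by (rule int_mult_not_in_gap)
  then have "\<not> (- real_of_int (2*C*k) \<le> of_int (C * (2 * k + d * (2*a1*a2 + n)))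
      \<and> real_of_int (C * (2 * k + d * (2*a1*a2 + n))) < of_int (2*C*k))"
    by (simp only: atLeastLessThan_iff of_int_le_iff of_int_less_iff flip: of_int_minus) simp
  with inner det show ?thesis by auto
qed

lemma sigma_conj_transpose_mult:
  fixes d r s u v m c :: int
  assumes "d \<ge> 0" "d = - s * r" "u * s - v * r = 1"
  shows "conj_transpose (mat2 (sqrt_neg d) (of_int r) (of_int (v * r)) (of_int u * sqrt_neg d))
      ** mat2 (of_int d) (of_int m * sqrt_neg d) (- (of_int m * sqrt_neg d)) (of_int (d * c))
      ** mat2 (sqrt_neg d) (of_int r) (of_int (v * r)) (of_int u * sqrt_neg d)
    = form_matrix d r (- s + 2 * m * v + c * v\<^sup>2 * r) (r - 2 * m * u - s * c * u\<^sup>2) (s * r - m * u * s - m * v * r - s * r * c * u * v)"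
proof -
  define w where "w = sqrt_neg d"
  have ww: "w * w = - of_int d" unfolding w_def using assms(1) by (rule sqrt_neg_mult_self)
  have d: "(of_int d :: complex) = - (of_int s * of_int r)" unfolding assms(2) by simp
  have us: "(of_int u * of_int s - of_int v * of_int r :: complex) = 1"
    using arg_cong[OF assms(3), of "of_int :: int \<Rightarrow> complex"] by simp
  show ?thesis
    unfolding conj_transpose_mat2 mat2_mult form_matrix_def mat2_eq_iff w_def[symmetric]
    using ww d us
    by (simp only: complex_cnj_mult complex_cnj_of_int cnj_sqrt_neg[of d, folded w_def] of_int_mult
        of_int_add of_int_diff of_int_power of_int_numeral of_int_minus) (intro conjI; algebra)
qed

theorem proposition5p4:
  fixes d r s u v m c :: int
  assumes "d > 0" and "squarefree d"
    and "r > 0" and "r dvd d" and "s = - (d div r)"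
    and "u * s - v * r = 1"
    and "0 < m" and "2 * m < d"
    and "0 < m\<^sup>2 - d * c" and "4 * (m\<^sup>2 - d * c) < d"
  shows "let \<sigma> = mat2 (sqrt_neg d) (of_int r) (of_int (v * r)) (of_int u * sqrt_neg d);
             A = mat2 (of_int d) (of_int m * sqrt_neg d) (- (of_int m * sqrt_neg d)) (of_int (d * c));
             A' = conj_transpose \<sigma> ** A ** \<sigma>
         in circle_matrix A' \<and> embedded_surface d A' \<and> orientable_surface d A'"
proof -
  define a1 where "a1 = - s + 2 * m * v + c * v\<^sup>2 * r"
  define a2 where "a2 = r - 2 * m * u - s * c * u\<^sup>2"
  define b where "b = s * r - m * u * s - m * v * r - s * r * c * u * v"
  define X where "X = form_matrix d r a1 a2 b"
  have d: "d = - s * r" using assms(4,5) by auto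
  have disc: "b\<^sup>2 - d * a1 * a2 = m\<^sup>2 - d * c"
    unfolding b_def a1_def a2_def d using assms(6) by algebra
  have A': "conj_transpose (mat2 (sqrt_neg d) (of_int r) (of_int (v * r)) (of_int u * sqrt_neg d))
      ** mat2 (of_int d) (of_int m * sqrt_neg d) (- (of_int m * sqrt_neg d)) (of_int (d * c))
      ** mat2 (sqrt_neg d) (of_int r) (of_int (v * r)) (of_int u * sqrt_neg d) = X"
    unfolding X_def a1_def a2_def b_def using assms(1,6) d by (intro sigma_conj_transpose_mult) auto
  have "(0::real) < of_int (r\<^sup>2 * d * (m\<^sup>2 - d * c))"
    using assms(1,3,9) by (simp only: of_int_0_less_iff) simp
  then have "Re (det X) < 0"
    unfolding X_def det_form_matrix[OF less_imp_le[OF assms(1)]] disc by simp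
  moreover have "hermitian2 X" unfolding X_def by (rule hermitian2_form_matrix)
  moreover have "Re (herm_inner X (pullback g X)) \<notin> {Re (det X)..<- Re (det X)}" if "g \<in> Gamma d" for g
    unfolding X_def using assms(1,3,9,10) that by (intro form_matrix_gap) (simp_all add: disc)
  ultimately show ?thesis
    unfolding Let_def A' circle_matrix_def
    by (simp add: embedded_surface_if_gap orientable_surface_if_gap)
qed

end
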